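(* Let $n\ge1$ and $A=(a_{i,j})\in\Theta_\vartriangle(n)$. Then $$\|A\|=\sum_{1\le i\le n,\ i<j}\sigma_{i,j}(A)+\sum_{1\le i\le n,\ i>j}\sigma_{i,j}(A),$$ where $j$ ranges over $\mathbb Z$. In particular, if $A,B\in\Theta_\vartriangle(n)$ satisfy $A\prec B$, then $\|A\|<\|B\|$.
   Context: $\Theta_\vartriangle(n)$ is the set of matrices $A=(a_{i,j})_{i,j\in\mathbb Z}$ with $a_{i,j}\in\mathbb N$, $a_{i+n,j+n}=a_{i,j}$, and for each $i$ only finitely many nonzero $a_{i,j}$. Define $\|A\|=\sum_{1\le i\le n,\,i<j}\frac{(j-i)(j-i+1)}{2}a_{i,j}+\sum_{1\le i\le n,\,i>j}\frac{(i-j)(i-j+1)}{2}a_{i,j}$. For $i\ne j$ put $\sigma_{i,j}(A)=\sum_{s\le i,\ t\ge j}a_{s,t}$ if $i<j$ and $\sigma_{i,j}(A)=\sum_{s\ge i,\ t\le j}a_{s,t}$ if $i>j$. Write $B\preceq A$ if $\sigma_{i,j}(B)\le\sigma_{i,j}(A)$ for all $i\ne j$, and $B\prec A$ if $B\preceq A$ and $\sigma_{i,j}(B)<\sigma_{i,j}(A)$ for some $i\ne j$. *)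

theory Defs
  imports Main
begin

type_synonym zmat = "int \<Rightarrow> int \<Rightarrow> nat"

text \<open>Sum of a nat-valued function over the (finite) support inside S.
  All sums below are over sets whose support is finite for matrices in Theta.\<close>
definition fsum :: "('a \<Rightarrow> nat) \<Rightarrow> 'a set \<Rightarrow> nat" where
  "fsum f S = (\<Sum>x\<in>{x\<in>S. f x \<noteq> 0}. f x)"

definition Theta :: "nat \<Rightarrow> zmat set" where
  "Theta n = {A. (\<forall>i j. A (i + int n) (j + int n) = A i j) \<and>
                 (\<forall>i. finite {j. A i j \<noteq> 0})}"

definition tnorm :: "nat \<Rightarrow> zmat \<Rightarrow> nat" where
  "tnorm n A =
     fsum (\<lambda>(i, j). (nat (j - i) * (nat (j - i) + 1) div 2) * A i j)
          {(i, j). 1 \<le> i \<and> i \<le> int n \<and> i < j}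
   + fsum (\<lambda>(i, j). (nat (i - j) * (nat (i - j) + 1) div 2) * A i j)
          {(i, j). 1 \<le> i \<and> i \<le> int n \<and> i > j}"

definition sigma :: "zmat \<Rightarrow> int \<Rightarrow> int \<Rightarrow> nat" where
  "sigma A i j =
     (if i < j then fsum (\<lambda>(s, t). A s t) {(s, t). s \<le> i \<and> j \<le> t}
      else if j < i then fsum (\<lambda>(s, t). A s t) {(s, t). i \<le> s \<and> t \<le> j}
      else 0)"

definition preceq :: "zmat \<Rightarrow> zmat \<Rightarrow> bool" where
  "preceq B A \<longleftrightarrow> (\<forall>i j. i \<noteq> j \<longrightarrow> sigma B i j \<le> sigma A i j)"

definition prec :: "zmat \<Rightarrow> zmat \<Rightarrow> bool" where
  "prec B A \<longleftrightarrow> preceq B A \<and> (\<exists>i j. i \<noteq> j \<and> sigma B i j < sigma A i j)"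

end

theory Submission
  imports Defs
begin

text \<open>Reflecting a matrix through the origin, \<open>(i, j) \<mapsto> (-i, -j)\<close>, turns the pairs
  \<open>i > j\<close> in \<open>\<parallel>A\<parallel>\<close> and in the \<open>\<sigma>\<close>-sum into pairs \<open>i < j\<close> with \<open>i\<close> in rows \<open>-n..-1\<close>, so it
  suffices to treat pairs \<open>i < j\<close> with \<open>i\<close> in an arbitrary window of \<open>n\<close> consecutive rows.
  Periodicity and row-finiteness confine the nonzero entries to a band \<open>\<bar>j - i\<bar> \<le> M\<close>, so all
  sums are finite. The entry \<open>a(s, s + c)\<close> contributes to \<open>\<sigma>(i, i + d)\<close> exactly when
  \<open>e = i - s \<ge> 0\<close> and \<open>d + e \<le> c\<close>; periodicity moves row \<open>s\<close> back into the window, and there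
  are \<open>c(c + 1)/2\<close> such pairs \<open>(d, e)\<close>, which is the weight of \<open>a(s, s + c)\<close> in \<open>\<parallel>A\<parallel>\<close>. Once
  \<open>\<parallel>A\<parallel>\<close> is a sum of \<open>\<sigma>\<close>'s, strict monotonicity follows by shifting a strict witness into
  the window.\<close>

lemma fsum_eq_sum:
  assumes "finite T" "T \<subseteq> S" "\<And>x. x \<in> S \<Longrightarrow> f x \<noteq> 0 \<Longrightarrow> x \<in> T"
  shows "fsum f S = sum f T"
  unfolding fsum_def by (rule sum.mono_neutral_left) (use assms in auto)

lemma fsum_reindex:
  assumes "inj_on h S"
  shows "fsum f (h ` S) = fsum (f \<circ> h) S"
proof -
  have "{x \<in> h ` S. f x \<noteq> 0} = h ` {x \<in> S. f (h x) \<noteq> 0}" by auto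
  moreover have "inj_on h {x \<in> S. f (h x) \<noteq> 0}" using assms by (rule inj_on_subset) auto
  ultimately show ?thesis unfolding fsum_def by (simp add: sum.reindex)
qed

lemma fsum_change_var:
  assumes "\<And>y. g (h y) = y" "\<And>x. h (g x) = x"
  shows "fsum f {x. P x} = fsum (f \<circ> h) {y. P (h y)}"
proof -
  have "{x. P x} = h ` {y. P (h y)}"
    using assms(2) by (metis (mono_tags) image_iff mem_Collect_eq subsetI subset_antisym)
  moreover have "inj_on h S" for S by (rule inj_on_inverseI) (rule assms(1))
  ultimately show ?thesis by (simp add: fsum_reindex)
qed

lemma fsum_nonzero: "fsum f S \<noteq> 0 \<Longrightarrow> \<exists>x\<in>S. f x \<noteq> 0"
  unfolding fsum_def by (metis (mono_tags, lifting) empty_Collect_eq sum.empty)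

lemma fsum_mono:
  assumes "\<And>x. x \<in> S \<Longrightarrow> f x \<le> g x" "finite {x \<in> S. g x \<noteq> 0}"
  shows "fsum f S \<le> fsum g S"
proof -
  have "fsum f S = sum f {x \<in> S. g x \<noteq> 0}"
    using assms(2) by (intro fsum_eq_sum) (auto intro: order.strict_trans2 assms(1))
  also have "\<dots> \<le> sum g {x \<in> S. g x \<noteq> 0}" using assms(1) by (intro sum_mono) auto
  finally show ?thesis by (simp add: fsum_def)
qed

lemma fsum_strict_mono:
  assumes "\<And>x. x \<in> S \<Longrightarrow> f x \<le> g x" "finite {x \<in> S. g x \<noteq> 0}"
    and "y \<in> S" "f y < g y"
  shows "fsum f S < fsum g S"
proof -
  have "fsum f S = sum f {x \<in> S. g x \<noteq> 0}"
    using assms(2) by (intro fsum_eq_sum) (auto intro: order.strict_trans2 assms(1))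
  also have "\<dots> < sum g {x \<in> S. g x \<noteq> 0}"
    using assms by (intro sum_strict_mono_ex1) auto
  finally show ?thesis by (simp add: fsum_def)
qed

lemma int_shift_into_window:
  assumes "0 < m"
  obtains q :: int where "a < i - q * m" "i - q * m \<le> a + m"
proof
  show "a < i - (i - a - 1) div m * m" "i - (i - a - 1) div m * m \<le> a + m"
    using pos_mod_bound[OF assms, of "i - a - 1"] pos_mod_sign[OF assms, of "i - a - 1"]
      div_mult_mod_eq[of "i - a - 1" m] by linarith+
qed

lemma sum_periodic_shift:
  fixes \<psi> :: "int \<Rightarrow> 'a::comm_monoid_add"
  assumes per: "\<And>x. \<psi> (x + int n) = \<psi> x"
  shows "(\<Sum>k<n. \<psi> (a + int k)) = (\<Sum>k<n. \<psi> (b + int k))"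
proof -
  define g where "g a = (\<Sum>k<n. \<psi> (a + int k))" for a
  have step: "g (a + 1) = g a" for a
  proof (cases n)
    case (Suc m)
    have "g (a + 1) = (\<Sum>k<m. \<psi> (a + int (Suc k))) + \<psi> (a + int n)"
      unfolding g_def Suc sum.lessThan_Suc by (simp add: algebra_simps)
    also have "\<dots> = \<psi> a + (\<Sum>k<m. \<psi> (a + int (Suc k)))" using per[of a] by (simp add: add.commute)
    also have "\<dots> = g a" unfolding g_def Suc sum.lessThan_Suc_shift by simp
    finally show ?thesis .
  qed (simp add: g_def)
  have "g x = g 0" for x
    by (induction x rule: int_induct[where k = 0]) (use step[of "_ - 1"] step in simp_all)
  then show ?thesis unfolding g_def by metis
qed

lemma triangle_count:
  assumes "c \<le> M"
  shows "(\<Sum>e<M. \<Sum>d\<in>{1..M}. if d + e \<le> c then 1 else 0) = c * (c + 1) div (2::nat)"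
proof -
  have "(\<Sum>d\<in>{1..M}. if d + e \<le> c then 1 else 0) = c - e" for e
  proof -
    have "{1..M} \<inter> {d. d + e \<le> c} = {1..c - e}" using assms by auto
    then show ?thesis by (simp add: sum.If_cases)
  qed
  then have "(\<Sum>e<M. \<Sum>d\<in>{1..M}. if d + e \<le> c then 1 else 0) = (\<Sum>e<M. c - e)" by simp
  also have "\<dots> = (\<Sum>e<Suc c. c - e)"
    using assms by (intro sum.mono_neutral_cong) auto
  also have "\<dots> = (\<Sum>e<Suc c. e)" using sum.nat_diff_reindex[of "\<lambda>e. e" "Suc c"] by simp
  also have "\<dots> = c * (c + 1) div 2" using gauss_sum_nat[of c] by (simp add: atLeast0AtMost lessThan_Suc_atMost)
  finally show ?thesis .
qed

lemma Theta_shift: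
  assumes "X \<in> Theta n"
  shows "X (i + q * int n) (j + q * int n) = X i j"
proof (induction q rule: int_induct[where k = 0])
  case (step1 q)
  have "X (i + (q + 1) * int n) (j + (q + 1) * int n) = X ((i + q * int n) + int n) ((j + q * int n) + int n)"
    by (simp add: algebra_simps)
  then show ?case using assms step1 by (simp add: Theta_def)
next
  case (step2 q)
  have "X (i + q * int n) (j + q * int n) = X ((i + (q - 1) * int n) + int n) ((j + (q - 1) * int n) + int n)"
    by (simp add: algebra_simps)
  then show ?case using assms step2 by (simp add: Theta_def)
qed simp

definition banded :: "nat \<Rightarrow> zmat \<Rightarrow> bool" where
  "banded M X \<longleftrightarrow> (\<forall>i j. X i j \<noteq> 0 \<longrightarrow> \<bar>j - i\<bar> \<le> int M)"

lemma banded_bound: "banded M X \<Longrightarrow> X i j \<noteq> 0 \<Longrightarrow> \<bar>j - i\<bar> \<le> int M"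
  by (simp add: banded_def)

lemma Theta_banded:
  assumes "X \<in> Theta n" "1 \<le> n"
  obtains M where "banded M X"
proof -
  define F where "F = Sigma {1..int n} (\<lambda>r. {j. X r j \<noteq> 0})"
  have "finite F" unfolding F_def using assms(1) by (auto simp: Theta_def)
  define M where "M = Max ((\<lambda>(r, j). nat \<bar>j - r\<bar>) ` F)"
  have M: "nat \<bar>j - r\<bar> \<le> M" if "(r, j) \<in> F" for r j
    unfolding M_def using \<open>finite F\<close> that by (intro Max_ge) auto
  have "\<bar>j - i\<bar> \<le> int M" if "X i j \<noteq> 0" for i j
  proof -
    obtain q where q: "0 < i - q * int n" "i - q * int n \<le> int n"
      using int_shift_into_window[of "int n" 0 i] assms(2) by auto
    have "X (i - q * int n) (j - q * int n) = X i j"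
      using Theta_shift[OF assms(1), of "i - q * int n" q "j - q * int n"] by simp
    then have "(i - q * int n, j - q * int n) \<in> F" using q that by (auto simp: F_def)
    then show ?thesis using M by fastforce
  qed
  then show ?thesis using that by (auto simp: banded_def)
qed

lemma sigma_shift:
  assumes "X \<in> Theta n"
  shows "sigma X (i + q * int n) (j + q * int n) = sigma X i j"
proof -
  define c where "c = q * int n"
  have "fsum (\<lambda>(s, t). X s t) {(s, t). P (s - c) (t - c)} = fsum (\<lambda>(s, t). X s t) {(s, t). P s t}" for P
    by (subst fsum_change_var[where h = "map_prod (\<lambda>s. s + c) (\<lambda>t. t + c)" and g = "map_prod (\<lambda>s. s - c) (\<lambda>t. t - c)"])
      (auto simp: c_def Theta_shift[OF assms] intro!: arg_cong2[where f = fsum])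
  from this[of "\<lambda>s t. s \<le> i \<and> j \<le> t"] this[of "\<lambda>s t. i \<le> s \<and> t \<le> j"] show ?thesis
    by (simp add: sigma_def c_def[symmetric] algebra_simps)
qed

definition reflect :: "zmat \<Rightarrow> zmat" where
  "reflect X i j = X (- i) (- j)"

lemma reflect_Theta: "X \<in> Theta n \<Longrightarrow> reflect X \<in> Theta n"
proof -
  assume X: "X \<in> Theta n"
  have "{j. X (- i) (- j) \<noteq> 0} = uminus ` {j. X (- i) j \<noteq> 0}" for i
    by (auto simp: image_iff) (metis minus_minus)
  moreover have "X (- (i + int n)) (- (j + int n)) = X (- i) (- j)" for i j
    using Theta_shift[OF X, of "- i" "- 1" "- j"] by (simp add: algebra_simps)
  ultimately show ?thesis using X by (auto simp: Theta_def reflect_def)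
qed

lemma reflect_banded:
  assumes "banded M X"
  shows "banded M (reflect X)"
  unfolding banded_def reflect_def
proof (intro allI impI)
  fix i j assume "X (- i) (- j) \<noteq> 0"
  then have "\<bar>- j - - i\<bar> \<le> int M" using assms unfolding banded_def by blast
  then show "\<bar>j - i\<bar> \<le> int M" by linarith
qed

lemma sigma_reflect: "sigma (reflect X) i j = sigma X (- i) (- j)"
proof -
  have "fsum (\<lambda>(s, t). X s t) {(s, t). P s t} = fsum (\<lambda>(s, t). reflect X s t) {(s, t). P (- s) (- t)}" for P
    by (subst fsum_change_var[where h = "map_prod uminus uminus" and g = "map_prod uminus uminus"])
      (auto simp: reflect_def intro!: arg_cong2[where f = fsum])
  from this[of "\<lambda>s t. - i \<le> s \<and> t \<le> - j"] this[of "\<lambda>s t. s \<le> - i \<and> - j \<le> t"] show ?thesis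
    by (auto simp: sigma_def)
qed

definition upper_pairs :: "nat \<Rightarrow> int \<Rightarrow> (int \<times> int) set" where
  "upper_pairs n a = {(i, j). a < i \<and> i \<le> a + int n \<and> i < j}"

lemma upper_pairs_support:
  assumes "\<And>i j. i < j \<Longrightarrow> F i j \<noteq> 0 \<Longrightarrow> j - i \<le> int M"
  shows "{x \<in> upper_pairs n a. (\<lambda>(i, j). F i j) x \<noteq> 0}
    \<subseteq> (\<lambda>(k, d). (a + 1 + int k, a + 1 + int k + int d)) ` ({..<n} \<times> {1..M})"
proof
  fix x assume "x \<in> {x \<in> upper_pairs n a. (\<lambda>(i, j). F i j) x \<noteq> 0}"
  then obtain i j where x: "x = (i, j)" "a < i" "i \<le> a + int n" "i < j" "F i j \<noteq> 0"
    by (auto simp: upper_pairs_def)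
  then have "j - i \<le> int M" using assms by blast
  with x show "x \<in> (\<lambda>(k, d). (a + 1 + int k, a + 1 + int k + int d)) ` ({..<n} \<times> {1..M})"
    by (intro image_eqI[where x = "(nat (i - a - 1), nat (j - i))"]) auto
qed

lemma fsum_upper_pairs:
  assumes "\<And>i j. i < j \<Longrightarrow> F i j \<noteq> 0 \<Longrightarrow> j - i \<le> int M"
  shows "fsum (\<lambda>(i, j). F i j) (upper_pairs n a)
    = (\<Sum>k<n. \<Sum>d\<in>{1..M}. F (a + 1 + int k) (a + 1 + int k + int d))"
proof -
  let ?p = "\<lambda>(k, d). (a + 1 + int k, a + 1 + int k + int d)"
  have "fsum (\<lambda>(i, j). F i j) (upper_pairs n a) = sum (\<lambda>(i, j). F i j) (?p ` ({..<n} \<times> {1..M}))"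
    using upper_pairs_support[of F M n a] assms by (intro fsum_eq_sum) (auto simp: upper_pairs_def)
  also have "\<dots> = sum ((\<lambda>(i, j). F i j) \<circ> ?p) ({..<n} \<times> {1..M})"
    by (rule sum.reindex) (auto simp: inj_on_def)
  finally show ?thesis unfolding sum.cartesian_product by (simp add: case_prod_beta)
qed

lemma sigma_upper_band:
  assumes "banded M X" "i < j" "sigma X i j \<noteq> 0"
  shows "j - i \<le> int M"
proof -
  have "fsum (\<lambda>(s, t). X s t) {(s, t). s \<le> i \<and> j \<le> t} \<noteq> 0"
    using assms(2,3) by (simp add: sigma_def)
  from fsum_nonzero[OF this] obtain s t where "s \<le> i" "j \<le> t" "X s t \<noteq> 0" by auto
  with assms(1) show ?thesis unfolding banded_def by fastforce
qed

lemma sigma_upper_eq_sum: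
  assumes "banded M X" "1 \<le> d"
  shows "sigma X i (i + int d)
    = (\<Sum>e<M. \<Sum>c\<in>{1..M}. if d + e \<le> c then X (i - int e) (i - int e + int c) else 0)"
proof -
  let ?p = "\<lambda>(e, c). (i - int e, i - int e + int c)"
  let ?R = "{x \<in> {..<M} \<times> {1..M}. d + fst x \<le> snd x}"
  have "inj_on ?p ?R" by (auto simp: inj_on_def)
  have "sigma X i (i + int d) = fsum (\<lambda>(s, t). X s t) {(s, t). s \<le> i \<and> i + int d \<le> t}"
    using assms(2) by (simp add: sigma_def)
  also have "\<dots> = sum (\<lambda>(s, t). X s t) (?p ` ?R)"
  proof (rule fsum_eq_sum)
    have "finite ?R" by (rule finite_subset[of _ "{..<M} \<times> {1..M}"]) auto
    then show "finite (?p ` ?R)" by simp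
    show "?p ` ?R \<subseteq> {(s, t). s \<le> i \<and> i + int d \<le> t}" by auto
    fix x assume "x \<in> {(s, t). s \<le> i \<and> i + int d \<le> t}" "(\<lambda>(s, t). X s t) x \<noteq> 0"
    then obtain s t where st: "x = (s, t)" "s \<le> i" "i + int d \<le> t" "X s t \<noteq> 0" by auto
    then have "\<bar>t - s\<bar> \<le> int M" using assms(1) unfolding banded_def by blast
    with st assms(2) show "x \<in> ?p ` ?R"
      by (intro image_eqI[where x = "(nat (i - s), nat (t - s))"]) auto
  qed
  also have "\<dots> = sum ((\<lambda>(s, t). X s t) \<circ> ?p) ?R"
    using \<open>inj_on ?p ?R\<close> by (rule sum.reindex)
  also have "\<dots> = (\<Sum>x\<in>{..<M} \<times> {1..M}. if d + fst x \<le> snd x then ((\<lambda>(s, t). X s t) \<circ> ?p) x else 0)"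
    by (rule sum.inter_filter) auto
  finally show ?thesis unfolding sum.cartesian_product by (rule trans) (rule sum.cong, auto)
qed

lemma upper_weighted_sum_eq_sigma_sum:
  assumes "X \<in> Theta n" "banded M X"
  shows "fsum (\<lambda>(i, j). (nat (j - i) * (nat (j - i) + 1) div 2) * X i j) (upper_pairs n a)
    = fsum (\<lambda>(i, j). sigma X i j) (upper_pairs n a)"
proof -
  define r where "r k = a + 1 + int k" for k
  define D where "D c s = X s (s + int c)" for c s
  have "D c (s + int n) = D c s" for c s
    using Theta_shift[OF assms(1), of s 1 "s + int c"] by (simp add: D_def algebra_simps)
  then have window: "(\<Sum>k<n. D c (r k - int e)) = (\<Sum>k<n. D c (r k))" for c e
    unfolding r_def using sum_periodic_shift[of "D c" n "a + 1 - int e" "a + 1"] by (simp add: algebra_simps)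
  have "fsum (\<lambda>(i, j). (nat (j - i) * (nat (j - i) + 1) div 2) * X i j) (upper_pairs n a)
      = (\<Sum>k<n. \<Sum>c\<in>{1..M}. (c * (c + 1) div 2) * D c (r k))"
    using assms(2) by (subst fsum_upper_pairs[where M = M]) (auto simp: r_def D_def dest: banded_bound)
  also have "\<dots> = (\<Sum>c\<in>{1..M}. (c * (c + 1) div 2) * (\<Sum>k<n. D c (r k)))"
    by (subst sum.swap) (simp add: sum_distrib_left)
  also have "\<dots> = (\<Sum>c\<in>{1..M}. (\<Sum>e<M. \<Sum>d\<in>{1..M}. if d + e \<le> c then 1 else 0) * (\<Sum>k<n. D c (r k)))"
    by (intro sum.cong refl arg_cong2[where f = "(*)"] triangle_count[symmetric]) auto
  also have "\<dots> = (\<Sum>c\<in>{1..M}. \<Sum>e<M. \<Sum>d\<in>{1..M}. if d + e \<le> c then \<Sum>k<n. D c (r k) else 0)"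
    by (simp add: sum_distrib_right if_distrib[of "\<lambda>x. x * _"] cong: if_cong)
  also have "\<dots> = (\<Sum>c\<in>{1..M}. \<Sum>e<M. \<Sum>d\<in>{1..M}. \<Sum>k<n. if d + e \<le> c then D c (r k - int e) else 0)"
    by (intro sum.cong refl) (simp add: window)
  also have "\<dots> = (\<Sum>k<n. \<Sum>d\<in>{1..M}. \<Sum>e<M. \<Sum>c\<in>{1..M}. if d + e \<le> c then D c (r k - int e) else 0)"
    by (simp only: sum.swap[of _ "{1..M}" "{..<n}"] sum.swap[of _ "{..<M}" "{..<n}"]
      sum.swap[of _ "{..<M}" "{1..M}"]) (rule sum.cong[OF refl], rule sum.swap)
  also have "\<dots> = (\<Sum>k<n. \<Sum>d\<in>{1..M}. sigma X (r k) (r k + int d))"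
    using assms(2) unfolding D_def by (simp add: sigma_upper_eq_sum)
  also have "\<dots> = fsum (\<lambda>(i, j). sigma X i j) (upper_pairs n a)"
    using sigma_upper_band[OF assms(2)] by (subst fsum_upper_pairs[where M = M]) (auto simp: r_def)
  finally show ?thesis .
qed

lemma lower_pairs_reflect:
  "fsum (\<lambda>(i, j). F i j) {(i, j). 1 \<le> i \<and> i \<le> int n \<and> i > j}
    = fsum (\<lambda>(i, j). F (- i) (- j)) (upper_pairs n (- int n - 1))"
  by (subst fsum_change_var[where h = "map_prod uminus uminus" and g = "map_prod uminus uminus"])
    (auto simp: upper_pairs_def intro!: arg_cong2[where f = fsum])

lemma upper_pairs_0: "upper_pairs n 0 = {(i, j). 1 \<le> i \<and> i \<le> int n \<and> i < j}"
  by (auto simp: upper_pairs_def)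

lemma tnorm_eq_upper_sigma_sums:
  assumes "X \<in> Theta n" "1 \<le> n"
  shows "tnorm n X = fsum (\<lambda>(i, j). sigma X i j) (upper_pairs n 0)
    + fsum (\<lambda>(i, j). sigma (reflect X) i j) (upper_pairs n (- int n - 1))"
proof -
  obtain M where M: "banded M X" using Theta_banded[OF assms] .
  have "tnorm n X = fsum (\<lambda>(i, j). (nat (j - i) * (nat (j - i) + 1) div 2) * X i j) (upper_pairs n 0)
    + fsum (\<lambda>(i, j). (nat (j - i) * (nat (j - i) + 1) div 2) * reflect X i j) (upper_pairs n (- int n - 1))"
    unfolding tnorm_def upper_pairs_0 lower_pairs_reflect by (simp add: reflect_def)
  then show ?thesis
    using upper_weighted_sum_eq_sigma_sum[OF assms(1) M]
      upper_weighted_sum_eq_sigma_sum[OF reflect_Theta[OF assms(1)] reflect_banded[OF M]] by simp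
qed

lemma sigma_sums_eq_upper_sigma_sums:
  "fsum (\<lambda>(i, j). sigma X i j) {(i, j). 1 \<le> i \<and> i \<le> int n \<and> i < j}
    + fsum (\<lambda>(i, j). sigma X i j) {(i, j). 1 \<le> i \<and> i \<le> int n \<and> i > j}
   = fsum (\<lambda>(i, j). sigma X i j) (upper_pairs n 0)
    + fsum (\<lambda>(i, j). sigma (reflect X) i j) (upper_pairs n (- int n - 1))"
  unfolding upper_pairs_0 lower_pairs_reflect by (simp add: sigma_reflect)

lemma finite_upper_sigma_support:
  assumes "X \<in> Theta n" "1 \<le> n"
  shows "finite {x \<in> upper_pairs n a. (\<lambda>(i, j). sigma X i j) x \<noteq> 0}"
proof -
  obtain M where "banded M X" using Theta_banded[OF assms] .
  then have "{x \<in> upper_pairs n a. (\<lambda>(i, j). sigma X i j) x \<noteq> 0}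
    \<subseteq> (\<lambda>(k, d). (a + 1 + int k, a + 1 + int k + int d)) ` ({..<n} \<times> {1..M})"
    by (intro upper_pairs_support sigma_upper_band)
  then show ?thesis by (rule finite_subset) simp
qed

lemma upper_sigma_sum_mono:
  assumes "B \<in> Theta n" "1 \<le> n" "\<And>i j. i < j \<Longrightarrow> sigma A i j \<le> sigma B i j"
  shows "fsum (\<lambda>(i, j). sigma A i j) (upper_pairs n a) \<le> fsum (\<lambda>(i, j). sigma B i j) (upper_pairs n a)"
  using assms finite_upper_sigma_support[OF assms(1,2)] by (intro fsum_mono) (auto simp: upper_pairs_def)

lemma upper_sigma_sum_strict_mono:
  assumes "A \<in> Theta n" "B \<in> Theta n" "1 \<le> n" "\<And>i j. i < j \<Longrightarrow> sigma A i j \<le> sigma B i j"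
    and "i0 < j0" "sigma A i0 j0 < sigma B i0 j0"
  shows "fsum (\<lambda>(i, j). sigma A i j) (upper_pairs n a) < fsum (\<lambda>(i, j). sigma B i j) (upper_pairs n a)"
proof -
  obtain q where q: "a < i0 - q * int n" "i0 - q * int n \<le> a + int n"
    using int_shift_into_window[of "int n" a i0] assms(3) by auto
  have "sigma X (i0 - q * int n) (j0 - q * int n) = sigma X i0 j0" if "X \<in> Theta n" for X
    using sigma_shift[OF that, of "i0 - q * int n" q "j0 - q * int n"] by simp
  with assms(1,2,6) have "sigma A (i0 - q * int n) (j0 - q * int n) < sigma B (i0 - q * int n) (j0 - q * int n)"
    by simp
  with q assms(4,5) show ?thesis using finite_upper_sigma_support[OF assms(2,3)]
    by (intro fsum_strict_mono[where y = "(i0 - q * int n, j0 - q * int n)"]) (auto simp: upper_pairs_def)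
qed

lemma upper_sigma_sums_strict_mono:
  assumes A: "A \<in> Theta n" and B: "B \<in> Theta n" and n: "1 \<le> n" and "prec A B"
  shows "fsum (\<lambda>(i, j). sigma A i j) (upper_pairs n 0)
      + fsum (\<lambda>(i, j). sigma (reflect A) i j) (upper_pairs n (- int n - 1))
    < fsum (\<lambda>(i, j). sigma B i j) (upper_pairs n 0)
      + fsum (\<lambda>(i, j). sigma (reflect B) i j) (upper_pairs n (- int n - 1))"
    (is "?S A 0 + ?S (reflect A) ?b < ?S B 0 + ?S (reflect B) ?b")
proof -
  obtain i0 j0 where ij: "i0 \<noteq> j0" "sigma A i0 j0 < sigma B i0 j0"
    and le: "\<And>i j. i \<noteq> j \<Longrightarrow> sigma A i j \<le> sigma B i j"
    using \<open>prec A B\<close> by (auto simp: prec_def preceq_def)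
  have le_up: "sigma A i j \<le> sigma B i j" if "i < j" for i j
    using le that by simp
  have le_refl: "sigma (reflect A) i j \<le> sigma (reflect B) i j" if "i < j" for i j
    using le[of "- i" "- j"] that by (simp add: sigma_reflect)
  have mono: "?S A 0 \<le> ?S B 0" "?S (reflect A) ?b \<le> ?S (reflect B) ?b"
    by (rule upper_sigma_sum_mono[OF B n le_up], assumption)
      (rule upper_sigma_sum_mono[OF reflect_Theta[OF B] n le_refl], assumption)
  show ?thesis
  proof (cases "i0 < j0")
    case True
    then have "?S A 0 < ?S B 0"
      by (intro upper_sigma_sum_strict_mono[OF A B n le_up _ ij(2)])
    then show ?thesis using mono(2) by (rule add_less_le_mono)
  next
    case False
    then have "- i0 < - j0" "sigma (reflect A) (- i0) (- j0) < sigma (reflect B) (- i0) (- j0)"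
      using ij by (simp_all add: sigma_reflect)
    then have "?S (reflect A) ?b < ?S (reflect B) ?b"
      by (intro upper_sigma_sum_strict_mono[OF reflect_Theta[OF A] reflect_Theta[OF B] n le_refl])
    with mono(1) show ?thesis by (rule add_le_less_mono)
  qed
qed

theorem lemma3p7p6:
  fixes n :: nat
  assumes "n \<ge> 1"
  shows "(\<forall>A \<in> Theta n.
            tnorm n A =
              fsum (\<lambda>(i, j). sigma A i j) {(i, j). 1 \<le> i \<and> i \<le> int n \<and> i < j}
            + fsum (\<lambda>(i, j). sigma A i j) {(i, j). 1 \<le> i \<and> i \<le> int n \<and> i > j})
       \<and> (\<forall>A \<in> Theta n. \<forall>B \<in> Theta n. prec A B \<longrightarrow> tnorm n A < tnorm n B)"
proof (intro conjI ballI impI)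
  fix A assume "A \<in> Theta n"
  then show "tnorm n A =
      fsum (\<lambda>(i, j). sigma A i j) {(i, j). 1 \<le> i \<and> i \<le> int n \<and> i < j}
    + fsum (\<lambda>(i, j). sigma A i j) {(i, j). 1 \<le> i \<and> i \<le> int n \<and> i > j}"
    using tnorm_eq_upper_sigma_sums assms sigma_sums_eq_upper_sigma_sums by simp
next
  fix A B assume "A \<in> Theta n" "B \<in> Theta n" "prec A B"
  then show "tnorm n A < tnorm n B"
    using upper_sigma_sums_strict_mono assms tnorm_eq_upper_sigma_sums by simp
qed

end
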